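(* If $T$ is a subcubic tree of order $n$, then $\psi(T)\le \frac{4n+2}{5}$. Furthermore, equality holds if and only if $T$ arises from $K_2$ by iteratively attaching $P_5$'s (i.e., by applying the operation of attaching a $P_5$ zero or more times).
   Context: All graphs are finite, simple and undirected. A subcubic tree is a tree of maximum degree at most $3$. A dissociation set in a graph $G$ is a vertex subset $F$ such that the induced subgraph $G[F]$ has maximum degree at most $1$; the dissociation number $\psi(G)$ is the maximum cardinality of a dissociation set of $G$. Attaching a $P_5$ to a tree $T$: choose a vertex $u$ of $T$ and form the tree $T'$ with $V(T')=V(T)\cup\{x,y,z,j,k\}$ (five new vertices) and $E(T')=E(T)\cup\{uz,zy,zj,yx,jk\}$. *)

theory Defs
  imports Complex_Main
begin

definition simple_graph :: "'a set \<Rightarrow> 'a set set \<Rightarrow> bool" where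
  "simple_graph V E \<longleftrightarrow> finite V \<and> (\<forall>e\<in>E. \<exists>u v. e = {u, v} \<and> u \<noteq> v \<and> u \<in> V \<and> v \<in> V)"

definition adj :: "'a set set \<Rightarrow> 'a \<Rightarrow> 'a \<Rightarrow> bool" where
  "adj E u v \<longleftrightarrow> {u, v} \<in> E"

definition degree :: "'a set \<Rightarrow> 'a set set \<Rightarrow> 'a \<Rightarrow> nat" where
  "degree V E v = card {u \<in> V. adj E u v}"

fun walk :: "'a set set \<Rightarrow> 'a list \<Rightarrow> bool" where
  "walk E [] = True"
| "walk E [v] = True"
| "walk E (u # v # vs) = (adj E u v \<and> walk E (v # vs))"

definition connected_graph :: "'a set \<Rightarrow> 'a set set \<Rightarrow> bool" where
  "connected_graph V E \<longleftrightarrow>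
     (\<forall>u\<in>V. \<forall>v\<in>V. \<exists>p. p \<noteq> [] \<and> hd p = u \<and> last p = v \<and> set p \<subseteq> V \<and> walk E p)"

definition has_cycle :: "'a set \<Rightarrow> 'a set set \<Rightarrow> bool" where
  "has_cycle V E \<longleftrightarrow>
     (\<exists>p. length p \<ge> 3 \<and> distinct p \<and> set p \<subseteq> V \<and> walk E p \<and> adj E (last p) (hd p))"

definition tree :: "'a set \<Rightarrow> 'a set set \<Rightarrow> bool" where
  "tree V E \<longleftrightarrow> simple_graph V E \<and> V \<noteq> {} \<and> connected_graph V E \<and> \<not> has_cycle V E"

definition subcubic_tree :: "'a set \<Rightarrow> 'a set set \<Rightarrow> bool" where
  "subcubic_tree V E \<longleftrightarrow> tree V E \<and> (\<forall>v\<in>V. degree V E v \<le> 3)"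

definition dissociation_set :: "'a set \<Rightarrow> 'a set set \<Rightarrow> 'a set \<Rightarrow> bool" where
  "dissociation_set V E F \<longleftrightarrow> F \<subseteq> V \<and> (\<forall>v\<in>F. card {u \<in> F. adj E u v} \<le> 1)"

definition dissociation_number :: "'a set \<Rightarrow> 'a set set \<Rightarrow> nat" where
  "dissociation_number V E = Max (card ` {F. dissociation_set V E F})"

inductive_set P5_trees :: "('a set \<times> 'a set set) set" where
  K2: "a \<noteq> b \<Longrightarrow> ({a, b}, {{a, b}}) \<in> P5_trees"
| attach: "\<lbrakk> (V, E) \<in> P5_trees; u \<in> V; distinct [x, y, z, j, k];
            x \<notin> V; y \<notin> V; z \<notin> V; j \<notin> V; k \<notin> V \<rbrakk>
           \<Longrightarrow> (V \<union> {x, y, z, j, k}, E \<union> {{u, z}, {z, y}, {z, j}, {y, x}, {j, k}}) \<in> P5_trees"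

end

theory Submission
  imports Defs
begin

text \<open>Let F be a maximum dissociation set and S = V - F. Each vertex of F has at most one
  neighbour in F and each vertex of S has degree at most 3, so counting the 2(n - 1) edge ends
  of the tree gives 2n - 2 \<le> |F| + 6|S|, i.e. 5|F| \<le> 4n + 2; only connectivity is used.
  In case of equality F induces a perfect matching and every vertex of S has exactly three
  neighbours, all in F. Connectivity makes every one of the 2|S| + 1 matching edges see S, while
  they see it only 3|S| times in total; hence more than |S| matching edges y x see S exactly
  once, through y, and two of them, y x and j k, see the same z \<in> S. Then x y z j k is a
  pendant P5 hanging from the third neighbour u of z; deleting it leaves a smaller extremal
  tree, and induction applies. Conversely, attaching a P5 adds 5 vertices and lets a
  dissociation set grow by x, y, j, k.\<close>

abbreviation nbrs :: "'a set \<Rightarrow> 'a set set \<Rightarrow> 'a \<Rightarrow> 'a set" where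
  "nbrs A E v \<equiv> {w \<in> A. adj E w v}"

lemma adj_commute: "adj E u v \<longleftrightarrow> adj E v u"
  by (simp add: adj_def insert_commute)

lemma simple_graph_finite: "simple_graph V E \<Longrightarrow> finite V"
  by (simp add: simple_graph_def)

lemma simple_graph_adj_irrefl: "simple_graph V E \<Longrightarrow> \<not> adj E v v"
  unfolding simple_graph_def adj_def by (metis doubleton_eq_iff insert_absorb2)

lemma simple_graph_adjD: "simple_graph V E \<Longrightarrow> adj E u v \<Longrightarrow> u \<in> V \<and> v \<in> V"
  unfolding simple_graph_def adj_def by (metis doubleton_eq_iff)

section \<open>Walks and connectivity\<close>

lemma walk_Cons_iff: "walk E (v # q) \<longleftrightarrow> q = [] \<or> adj E v (hd q) \<and> walk E q"
  by (cases q) auto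

lemma walk_mono: "walk E p \<Longrightarrow> (\<And>a b. adj E a b \<Longrightarrow> adj E' a b) \<Longrightarrow> walk E' p"
  by (induction E p rule: walk.induct) auto

lemma walk_set_closed:
  "walk E p \<Longrightarrow> hd p \<in> C \<Longrightarrow> (\<And>a b. a \<in> C \<Longrightarrow> adj E a b \<Longrightarrow> b \<in> C) \<Longrightarrow> set p \<subseteq> C"
  by (induction E p rule: walk.induct) auto

lemma walk_collapse:
  assumes "walk E p" "p \<noteq> []" "set p \<subseteq> V"
    and collapse: "\<And>a b. a \<in> V \<Longrightarrow> b \<in> V \<Longrightarrow> adj E a b \<Longrightarrow> f a = f b \<or> adj E' (f a) (f b)"
  shows "\<exists>q. q \<noteq> [] \<and> walk E' q \<and> hd q = f (hd p) \<and> last q = f (last p) \<and> set q \<subseteq> f ` set p"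
  using assms(1-3)
proof (induction p)
  case Nil
  then show ?case by simp
next
  case (Cons v p)
  show ?case
  proof (cases "p = []")
    case True
    then show ?thesis by (intro exI[of _ "[f v]"]) simp
  next
    case False
    with Cons.prems have "walk E p" "adj E v (hd p)" "set p \<subseteq> V" "v \<in> V" "hd p \<in> V"
      by (auto simp: walk_Cons_iff)
    moreover obtain q where q: "q \<noteq> []" "walk E' q" "hd q = f (hd p)" "last q = f (last p)"
        "set q \<subseteq> f ` set p"
      using Cons.IH False calculation by blast
    ultimately consider "f v = hd q" | "adj E' (f v) (hd q)"
      using collapse by metis
    then show ?thesis
    proof cases
      case 1
      then show ?thesis using q False by (intro exI[of _ q]) auto
    next
      case 2
      then show ?thesis using q False by (intro exI[of _ "f v # q"]) (auto simp: walk_Cons_iff)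
    qed
  qed
qed

lemma connected_graph_retract:
  assumes "connected_graph V E" "A \<subseteq> V"
    and into: "\<And>v. v \<in> V \<Longrightarrow> f v \<in> A" and fixes_A: "\<And>v. v \<in> A \<Longrightarrow> f v = v"
    and collapse: "\<And>a b. a \<in> V \<Longrightarrow> b \<in> V \<Longrightarrow> adj E a b \<Longrightarrow> f a = f b \<or> adj E' (f a) (f b)"
  shows "connected_graph A E'"
  unfolding connected_graph_def
proof (intro ballI)
  fix a b assume "a \<in> A" "b \<in> A"
  then obtain p where "p \<noteq> []" "hd p = a" "last p = b" "set p \<subseteq> V" "walk E p"
    using assms(1,2) unfolding connected_graph_def by blast
  then obtain q where "q \<noteq> []" "walk E' q" "hd q = f a" "last q = f b" "set q \<subseteq> f ` set p"
    using walk_collapse[where f = f and E' = E', OF \<open>walk E p\<close> \<open>p \<noteq> []\<close> \<open>set p \<subseteq> V\<close> collapse]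
    by blast
  moreover have "f ` set p \<subseteq> A" using \<open>set p \<subseteq> V\<close> into by blast
  ultimately show "\<exists>q. q \<noteq> [] \<and> hd q = a \<and> last q = b \<and> set q \<subseteq> A \<and> walk E' q"
    using fixes_A \<open>a \<in> A\<close> \<open>b \<in> A\<close> by auto
qed

lemma connected_graph_parent:
  assumes "connected_graph V E" "r \<in> V"
  shows "\<exists>(rk :: 'a \<Rightarrow> nat) par. \<forall>v\<in>V - {r}. par v \<in> V \<and> adj E v (par v) \<and> rk (par v) < rk v"
proof -
  define reach where "reach v k \<longleftrightarrow>
    (\<exists>p. walk E (v # p) \<and> last (v # p) = r \<and> set p \<subseteq> V \<and> length p = k)" for v k
  define rk where "rk v = (LEAST k. reach v k)" for v
  have "\<forall>v\<in>V - {r}. \<exists>a. a \<in> V \<and> adj E v a \<and> rk a < rk v"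
  proof
    fix v assume v: "v \<in> V - {r}"
    obtain p where "p \<noteq> []" "hd p = v" "last p = r" "set p \<subseteq> V" "walk E p"
      using assms v unfolding connected_graph_def by blast
    then have "reach v (length (tl p))"
      unfolding reach_def by (intro exI[of _ "tl p"]) (cases p, auto)
    then have "reach v (rk v)" unfolding rk_def by (rule LeastI)
    then obtain p where p: "walk E (v # p)" "last (v # p) = r" "set p \<subseteq> V" "length p = rk v"
      unfolding reach_def by blast
    then obtain a p' where "p = a # p'" using v by (cases p) auto
    with p have "a \<in> V" "adj E v a" "reach a (length p')"
      unfolding reach_def by auto
    moreover from this have "rk a \<le> length p'" unfolding rk_def by (simp add: Least_le)
    ultimately show "\<exists>a. a \<in> V \<and> adj E v a \<and> rk a < rk v"
      using p \<open>p = a # p'\<close> by auto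
  qed
  then have "\<exists>par. \<forall>v\<in>V - {r}. par v \<in> V \<and> adj E v (par v) \<and> rk (par v) < rk v"
    by (rule bchoice)
  then show ?thesis by blast
qed

section \<open>Counting edge ends\<close>

lemma degree_sum_ge:
  assumes "simple_graph V E" "connected_graph V E"
  shows "2 * card V \<le> (\<Sum>v\<in>V. degree V E v) + 2"
proof (cases "V = {}")
  case False
  then obtain r where r: "r \<in> V" by blast
  obtain rk :: "'a \<Rightarrow> nat" and par where par:
    "\<And>v. v \<in> V - {r} \<Longrightarrow> par v \<in> V \<and> adj E v (par v) \<and> rk (par v) < rk v"
    using connected_graph_parent[OF assms(2) r] by blast
  have fin: "finite V" using assms(1) by (rule simple_graph_finite)
  define arcs where "arcs = (SIGMA v:V. nbrs V E v)"
  define up where "up = (\<lambda>v. (v, par v)) ` (V - {r})"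
  define down where "down = (\<lambda>v. (par v, v)) ` (V - {r})"
  have "inj_on (\<lambda>v. (v, par v)) (V - {r})" "inj_on (\<lambda>v. (par v, v)) (V - {r})"
    by (auto intro: inj_onI)
  then have "card up = card V - 1" "card down = card V - 1"
    unfolding up_def down_def using fin r by (simp_all add: card_image)
  moreover have "up \<inter> down = {}"
  proof -
    have "(v, par v) \<noteq> (par w, w)" if "v \<in> V - {r}" "w \<in> V - {r}" for v w
      using par[OF that(1)] par[OF that(2)] by auto
    then show ?thesis unfolding up_def down_def by blast
  qed
  ultimately have "card (up \<union> down) = 2 * (card V - 1)"
    using fin unfolding up_def down_def by (simp add: card_Un_disjoint)
  moreover have "up \<union> down \<subseteq> arcs"
    unfolding up_def down_def arcs_def using par by (auto simp: adj_commute)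
  moreover have "finite arcs" unfolding arcs_def using fin by simp
  ultimately have "2 * (card V - 1) \<le> card arcs"
    by (metis card_mono)
  also have "card arcs = (\<Sum>v\<in>V. degree V E v)"
    unfolding arcs_def using fin by (simp add: degree_def)
  finally show ?thesis by linarith
qed simp

lemma degree_split:
  assumes "finite V" "F \<subseteq> V"
  shows "degree V E v = card (nbrs F E v) + card (nbrs (V - F) E v)"
proof -
  have "nbrs V E v = nbrs F E v \<union> nbrs (V - F) E v" using assms(2) by blast
  then show ?thesis
    unfolding degree_def using assms by (simp add: card_Un_disjoint disjoint_iff finite_subset)
qed

text \<open>Every edge between F and V - F is charged twice to its end outside F.\<close>
lemma degree_sum_split:
  assumes "finite V" "F \<subseteq> V"
  shows "(\<Sum>v\<in>V. degree V E v) =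
    (\<Sum>v\<in>F. card (nbrs F E v)) + (\<Sum>v\<in>V - F. 2 * card (nbrs F E v) + card (nbrs (V - F) E v))"
proof -
  have finF: "finite F" using assms finite_subset by blast
  have "(\<Sum>v\<in>F. card (nbrs (V - F) E v)) = (\<Sum>v\<in>V - F. card {w \<in> F. adj E v w})"
    using assms finF by (intro sum_multicount_gen) auto
  also have "\<dots> = (\<Sum>v\<in>V - F. card (nbrs F E v))"
    by (simp add: adj_commute)
  finally have cross: "(\<Sum>v\<in>F. card (nbrs (V - F) E v)) = (\<Sum>v\<in>V - F. card (nbrs F E v))" .
  have "(\<Sum>v\<in>V. degree V E v) = (\<Sum>v\<in>F. degree V E v) + (\<Sum>v\<in>V - F. degree V E v)"
    using sum.subset_diff[OF assms(2,1)] by (simp add: add.commute)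
  also have "\<dots> = (\<Sum>v\<in>F. card (nbrs F E v)) + (\<Sum>v\<in>F. card (nbrs (V - F) E v))
      + (\<Sum>v\<in>V - F. card (nbrs F E v) + card (nbrs (V - F) E v))"
    using degree_split[OF assms] by (simp add: sum.distrib)
  finally show ?thesis
    using cross by (simp add: sum.distrib mult_2)
qed

lemma dissociation_degree_count:
  assumes "simple_graph V E" "connected_graph V E" "\<forall>v\<in>V. degree V E v \<le> 3"
    and "dissociation_set V E F"
  shows "2 * card V \<le> (\<Sum>v\<in>F. card (nbrs F E v))
           + (\<Sum>v\<in>V - F. 2 * card (nbrs F E v) + card (nbrs (V - F) E v)) + 2"
    and "(\<Sum>v\<in>F. card (nbrs F E v)) \<le> card F"
    and "(\<Sum>v\<in>V - F. 2 * card (nbrs F E v) + card (nbrs (V - F) E v)) \<le> 6 * card (V - F)"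
proof -
  have fin: "finite V" and FV: "F \<subseteq> V"
    using assms(1,4) by (auto simp: simple_graph_finite dissociation_set_def)
  show "2 * card V \<le> (\<Sum>v\<in>F. card (nbrs F E v))
          + (\<Sum>v\<in>V - F. 2 * card (nbrs F E v) + card (nbrs (V - F) E v)) + 2"
    using degree_sum_ge[OF assms(1,2)] degree_sum_split[OF fin FV] by simp
  have "(\<Sum>v\<in>F. card (nbrs F E v)) \<le> (\<Sum>v\<in>F. 1)"
    using assms(4) unfolding dissociation_set_def by (intro sum_mono) auto
  then show "(\<Sum>v\<in>F. card (nbrs F E v)) \<le> card F" by simp
  have "(\<Sum>v\<in>V - F. 2 * card (nbrs F E v) + card (nbrs (V - F) E v)) \<le> (\<Sum>v\<in>V - F. 6)"
    using assms(3) degree_split[OF fin FV] by (intro sum_mono) fastforce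
  then show "(\<Sum>v\<in>V - F. 2 * card (nbrs F E v) + card (nbrs (V - F) E v)) \<le> 6 * card (V - F)"
    by simp
qed

lemma dissociation_set_card_bound:
  assumes "simple_graph V E" "connected_graph V E" "\<forall>v\<in>V. degree V E v \<le> 3"
    and "dissociation_set V E F"
  shows "5 * card F \<le> 4 * card V + 2"
proof -
  have "finite V" "F \<subseteq> V"
    using assms(1,4) by (auto simp: simple_graph_finite dissociation_set_def)
  then have "card V = card F + card (V - F)"
    by (metis card_Diff_subset card_mono finite_subset le_add_diff_inverse)
  then show ?thesis using dissociation_degree_count[OF assms] by linarith
qed

section \<open>The dissociation number\<close>

lemma finite_dissociation_sets: "finite V \<Longrightarrow> finite {F. dissociation_set V E F}"
  unfolding dissociation_set_def by (rule finite_subset[of _ "Pow V"]) auto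

lemma card_le_dissociation_number:
  "finite V \<Longrightarrow> dissociation_set V E F \<Longrightarrow> card F \<le> dissociation_number V E"
  unfolding dissociation_number_def by (rule Max_ge) (auto intro: finite_dissociation_sets)

lemma dissociation_number_attained:
  assumes "finite V"
  obtains F where "dissociation_set V E F" "card F = dissociation_number V E"
proof -
  have "dissociation_set V E {}" unfolding dissociation_set_def by simp
  then have "dissociation_number V E \<in> card ` {F. dissociation_set V E F}"
    unfolding dissociation_number_def using assms by (intro Max_in) (auto intro: finite_dissociation_sets)
  then obtain F where "dissociation_set V E F" "dissociation_number V E = card F" by auto
  with that show ?thesis by simp
qed

lemma dissociation_number_bound:
  assumes "simple_graph V E" "connected_graph V E" "\<forall>v\<in>V. degree V E v \<le> 3"
  shows "5 * dissociation_number V E \<le> 4 * card V + 2"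
  using dissociation_number_attained[OF simple_graph_finite[OF assms(1)]]
    dissociation_set_card_bound[OF assms] by metis

lemma dissociation_set_subgraph:
  assumes "dissociation_set V E F" "finite V" "F' \<subseteq> F" "F' \<subseteq> V'"
    and "\<And>a b. adj E' a b \<Longrightarrow> adj E a b"
  shows "dissociation_set V' E' F'"
  unfolding dissociation_set_def
proof (intro conjI ballI)
  fix v assume "v \<in> F'"
  have "finite F" using assms(1,2) finite_subset unfolding dissociation_set_def by blast
  then have "card (nbrs F' E' v) \<le> card (nbrs F E v)"
    using assms(3,5) by (intro card_mono) auto
  also have "\<dots> \<le> 1" using assms(1,3) \<open>v \<in> F'\<close> unfolding dissociation_set_def by blast
  finally show "card (nbrs F' E' v) \<le> 1" .
qed (use assms(4) in simp)

lemma P5_trees_finite_edges_in: "(V, E) \<in> P5_trees \<Longrightarrow> finite V \<and> (\<forall>e\<in>E. e \<subseteq> V)"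
  by (induction rule: P5_trees.induct) auto

lemma card_le_1_if_subset_singleton: "A \<subseteq> {b} \<Longrightarrow> card A \<le> 1"
  by (auto dest: subset_singletonD)

lemma dissociation_set_attach_P5:
  assumes "finite V" "\<forall>e\<in>E. e \<subseteq> V" "dissociation_set V E F" "u \<in> V"
    and "distinct [x, y, z, j, k]" "{x, y, z, j, k} \<inter> V = {}"
  shows "dissociation_set (V \<union> {x, y, z, j, k}) (E \<union> {{u, z}, {z, y}, {z, j}, {y, x}, {j, k}})
           (F \<union> {x, y, j, k})"
    (is "dissociation_set ?V ?E ?F")
  unfolding dissociation_set_def
proof (intro conjI ballI)
  have FV: "F \<subseteq> V" using assms(3) unfolding dissociation_set_def by simp
  then show "?F \<subseteq> ?V" by auto
  have adjE: "w \<in> V \<and> v \<in> V" if "adj E w v" for w v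
    using that assms(2) unfolding adj_def by auto
  note simps = adj_def doubleton_eq_iff
  fix v assume "v \<in> ?F"
  then consider "v \<in> F" | "v \<in> {x, y, j, k}" by blast
  then show "card (nbrs ?F ?E v) \<le> 1"
  proof cases
    case 1
    have "nbrs ?F ?E v \<subseteq> nbrs F E v"
      using 1 FV assms(5,6) adjE by (auto simp: simps)
    moreover have "finite F" using assms(1) FV finite_subset by blast
    ultimately have "card (nbrs ?F ?E v) \<le> card (nbrs F E v)" by (intro card_mono) auto
    also have "\<dots> \<le> 1" using assms(3) 1 unfolding dissociation_set_def by blast
    finally show ?thesis .
  next
    case 2
    then have "nbrs ?F ?E v \<subseteq> {if v = x then y else if v = y then x else if v = j then k else j}"
      using FV assms(5,6) adjE by (auto simp: simps)
    then show ?thesis by (rule card_le_1_if_subset_singleton)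
  qed
qed

lemma P5_trees_dissociation_number:
  "(V, E) \<in> P5_trees \<Longrightarrow> 4 * card V + 2 \<le> 5 * dissociation_number V E"
proof (induction rule: P5_trees.induct)
  case (K2 a b)
  have "card (nbrs {a, b} {{a, b}} v) \<le> 1" if "v \<in> {a, b}" for v
  proof -
    have "nbrs {a, b} {{a, b}} v \<subseteq> {a, b} - {v}"
      using K2.hyps unfolding adj_def by (auto simp: doubleton_eq_iff)
    also have "\<dots> = {if v = a then b else a}" using that K2.hyps by auto
    finally show ?thesis by (rule card_le_1_if_subset_singleton)
  qed
  then have "dissociation_set {a, b} {{a, b}} {a, b}" unfolding dissociation_set_def by blast
  then have "card {a, b} \<le> dissociation_number {a, b} {{a, b}}"
    by (intro card_le_dissociation_number) simp
  then show ?case using K2 by simp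
next
  case (attach V E u x y z j k)
  have fin: "finite V" and edges_in: "\<forall>e\<in>E. e \<subseteq> V"
    using P5_trees_finite_edges_in[OF attach.hyps(1)] by auto
  obtain F where F: "dissociation_set V E F" "card F = dissociation_number V E"
    using dissociation_number_attained[OF fin] by blast
  have FV: "F \<subseteq> V" using F(1) unfolding dissociation_set_def by simp
  have "dissociation_set (V \<union> {x, y, z, j, k}) (E \<union> {{u, z}, {z, y}, {z, j}, {y, x}, {j, k}})
          (F \<union> {x, y, j, k})"
    using attach.hyps by (intro dissociation_set_attach_P5[OF fin edges_in F(1)]) auto
  then have "card (F \<union> {x, y, j, k})
      \<le> dissociation_number (V \<union> {x, y, z, j, k}) (E \<union> {{u, z}, {z, y}, {z, j}, {y, x}, {j, k}})"
    using fin by (intro card_le_dissociation_number) auto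
  moreover have "card (F \<union> {x, y, j, k}) = card F + 4"
    using FV fin attach.hyps(3-8) by (subst card_Un_disjoint) (auto intro: finite_subset)
  moreover have "card (V \<union> {x, y, z, j, k}) = card V + 5"
    using fin attach.hyps(3-8) by (subst card_Un_disjoint) auto
  ultimately show ?case using attach.IH F(2) by simp
qed

section \<open>Pendant paths on five vertices\<close>

lemma adj_induced: "adj {e \<in> E. e \<subseteq> A} a b \<longleftrightarrow> adj E a b \<and> a \<in> A \<and> b \<in> A"
  by (auto simp: adj_def)

lemma subcubic_tree_induced:
  assumes "subcubic_tree V E" "A \<subseteq> V" "A \<noteq> {}" "connected_graph A {e \<in> E. e \<subseteq> A}"
  shows "subcubic_tree A {e \<in> E. e \<subseteq> A}"
proof -
  have sg: "simple_graph V E" and nc: "\<not> has_cycle V E" and dg: "\<forall>v\<in>V. degree V E v \<le> 3"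
    using assms(1) unfolding subcubic_tree_def tree_def by auto
  have fin: "finite V" using sg by (rule simple_graph_finite)
  have "simple_graph A {e \<in> E. e \<subseteq> A}"
    using sg assms(2) fin finite_subset unfolding simple_graph_def by fastforce
  moreover have "\<not> has_cycle A {e \<in> E. e \<subseteq> A}"
  proof
    assume "has_cycle A {e \<in> E. e \<subseteq> A}"
    then obtain p where "length p \<ge> 3" "distinct p" "set p \<subseteq> A"
        "walk {e \<in> E. e \<subseteq> A} p" "adj {e \<in> E. e \<subseteq> A} (last p) (hd p)"
      unfolding has_cycle_def by blast
    moreover have "walk E p" using \<open>walk {e \<in> E. e \<subseteq> A} p\<close> by (rule walk_mono) (simp add: adj_induced)
    ultimately have "has_cycle V E"
      unfolding has_cycle_def using assms(2) by (intro exI[of _ p]) (auto simp: adj_induced)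
    then show False using nc by contradiction
  qed
  moreover have "degree A {e \<in> E. e \<subseteq> A} v \<le> 3" if "v \<in> A" for v
  proof -
    have "degree A {e \<in> E. e \<subseteq> A} v \<le> degree V E v"
      unfolding degree_def using fin assms(2) by (intro card_mono) (auto simp: adj_induced)
    then show ?thesis using dg that assms(2) by force
  qed
  ultimately show ?thesis using assms(3,4) unfolding subcubic_tree_def tree_def by blast
qed

text \<open>The configuration created by rule attach of P5_trees: the path x y z j k hangs from u
  by its centre z, and no other edges touch it.\<close>
definition pendant_P5 :: "'a set \<Rightarrow> 'a set set \<Rightarrow> 'a \<Rightarrow> 'a \<Rightarrow> 'a \<Rightarrow> 'a \<Rightarrow> 'a \<Rightarrow> 'a \<Rightarrow> bool" where
  "pendant_P5 V E u x y z j k \<longleftrightarrow> distinct [x, y, z, j, k] \<and> u \<notin> {x, y, z, j, k} \<and>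
     nbrs V E x = {y} \<and> nbrs V E y = {x, z} \<and> nbrs V E z = {y, j, u} \<and>
     nbrs V E j = {k, z} \<and> nbrs V E k = {j}"

lemma pendant_P5D:
  assumes "pendant_P5 V E u x y z j k"
  shows "distinct [x, y, z, j, k]" "u \<notin> {x, y, z, j, k}" "nbrs V E x = {y}" "nbrs V E y = {x, z}"
    "nbrs V E z = {y, j, u}" "nbrs V E j = {k, z}" "nbrs V E k = {j}"
  using assms unfolding pendant_P5_def by blast+

lemma pendant_P5_edges_in:
  assumes "pendant_P5 V E u x y z j k"
  shows "{{u, z}, {z, y}, {z, j}, {y, x}, {j, k}} \<subseteq> E"
proof -
  note D = pendant_P5D[OF assms]
  have "u \<in> nbrs V E z" "z \<in> nbrs V E y" "z \<in> nbrs V E j" "y \<in> nbrs V E x" "j \<in> nbrs V E k"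
    by (simp_all only: D) simp_all
  then show ?thesis by (simp add: adj_def)
qed

lemma pendant_P5_in_V:
  assumes "pendant_P5 V E u x y z j k"
  shows "{x, y, z, j, k} \<subseteq> V" "u \<in> V"
proof -
  note D = pendant_P5D[OF assms]
  have "y \<in> nbrs V E x" "x \<in> nbrs V E y" "z \<in> nbrs V E y" "u \<in> nbrs V E z" "j \<in> nbrs V E z"
      "k \<in> nbrs V E j"
    by (simp_all only: D) simp_all
  then show "{x, y, z, j, k} \<subseteq> V" "u \<in> V" by simp_all
qed

lemma pendant_P5_edge:
  assumes "simple_graph V E" "pendant_P5 V E u x y z j k" "adj E a b" "a \<in> {x, y, z, j, k}"
  shows "{a, b} \<in> {{u, z}, {z, y}, {z, j}, {y, x}, {j, k}}"
proof -
  note D = pendant_P5D[OF assms(2)]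
  have b: "b \<in> nbrs V E a" using simple_graph_adjD[OF assms(1,3)] assms(3) by (simp add: adj_commute)
  from assms(4) consider "a = x" | "a = y" | "a = z" | "a = j" | "a = k" by blast
  then show ?thesis
  proof cases
    case 1
    with b have "b \<in> {y}" by (simp only: D)
    with 1 show ?thesis by (auto simp: doubleton_eq_iff)
  next
    case 2
    with b have "b \<in> {x, z}" by (simp only: D)
    with 2 show ?thesis by (auto simp: doubleton_eq_iff)
  next
    case 3
    with b have "b \<in> {y, j, u}" by (simp only: D)
    with 3 show ?thesis by (auto simp: doubleton_eq_iff)
  next
    case 4
    with b have "b \<in> {k, z}" by (simp only: D)
    with 4 show ?thesis by (auto simp: doubleton_eq_iff)
  next
    case 5
    with b have "b \<in> {j}" by (simp only: D)
    with 5 show ?thesis by (auto simp: doubleton_eq_iff)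
  qed
qed

lemma pendant_P5_removal:
  assumes "subcubic_tree V E" "pendant_P5 V E u x y z j k"
  shows "subcubic_tree (V - {x, y, z, j, k}) {e \<in> E. e \<subseteq> V - {x, y, z, j, k}}"
    and "E = {e \<in> E. e \<subseteq> V - {x, y, z, j, k}} \<union> {{u, z}, {z, y}, {z, j}, {y, x}, {j, k}}"
proof -
  let ?P = "{x, y, z, j, k}"
  let ?V' = "V - ?P" and ?E' = "{e \<in> E. e \<subseteq> V - ?P}"
  have sg: "simple_graph V E" and conn: "connected_graph V E"
    using assms(1) unfolding subcubic_tree_def tree_def by auto
  have u: "u \<in> ?V'" using pendant_P5_in_V(2)[OF assms(2)] pendant_P5D(2)[OF assms(2)] by blast
  note edge = pendant_P5_edge[OF sg assms(2)]
  have exit_u: "b = u" if "adj E a b" "a \<in> ?P" "b \<notin> ?P" for a b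
    using edge[OF that(1,2)] that(3) by (auto simp: doubleton_eq_iff)
  show "E = ?E' \<union> {{u, z}, {z, y}, {z, j}, {y, x}, {j, k}}"
  proof
    show "?E' \<union> {{u, z}, {z, y}, {z, j}, {y, x}, {j, k}} \<subseteq> E"
      using pendant_P5_edges_in[OF assms(2)] by blast
    show "E \<subseteq> ?E' \<union> {{u, z}, {z, y}, {z, j}, {y, x}, {j, k}}"
    proof
      fix e assume "e \<in> E"
      then obtain a b where e: "e = {a, b}" "a \<in> V" "b \<in> V"
        using sg unfolding simple_graph_def by blast
      have ba: "{b, a} = e" unfolding e(1) by (rule insert_commute)
      have ab: "adj E a b" "adj E b a" using \<open>e \<in> E\<close> unfolding adj_def ba by (simp_all add: e(1))
      consider "a \<notin> ?P" "b \<notin> ?P" | "a \<in> ?P" | "b \<in> ?P" by blast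
      then show "e \<in> ?E' \<union> {{u, z}, {z, y}, {z, j}, {y, x}, {j, k}}"
      proof cases
        case 1
        then have "e \<subseteq> ?V'" using e by blast
        then show ?thesis using \<open>e \<in> E\<close> by (intro UnI1) simp
      next
        case 2
        show ?thesis unfolding e(1) by (rule UnI2) (rule edge[OF ab(1) 2])
      next
        case 3
        show ?thesis unfolding ba[symmetric] by (rule UnI2) (rule edge[OF ab(2) 3])
      qed
    qed
  qed
  have "connected_graph ?V' ?E'"
  proof (rule connected_graph_retract[OF conn, where f = "\<lambda>v. if v \<in> ?P then u else v"])
    fix a b assume ab: "a \<in> V" "b \<in> V" "adj E a b"
    then have ba: "adj E b a" by (simp add: adj_commute)
    consider "a \<in> ?P" "b \<in> ?P" | "a \<in> ?P" "b \<notin> ?P" | "a \<notin> ?P" "b \<in> ?P" | "a \<notin> ?P" "b \<notin> ?P"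
      by blast
    then show "(if a \<in> ?P then u else a) = (if b \<in> ?P then u else b) \<or>
        adj ?E' (if a \<in> ?P then u else a) (if b \<in> ?P then u else b)"
    proof cases
      case 2
      then show ?thesis using exit_u[OF ab(3)] by simp
    next
      case 3
      then show ?thesis using exit_u[OF ba] by simp
    next
      case 4
      then show ?thesis using ab by (simp add: adj_induced)
    qed simp
  qed (use u in auto)
  then show "subcubic_tree ?V' ?E'"
    by (intro subcubic_tree_induced[OF assms(1)]) (use u in auto)
qed

lemma card_remove_pendant_P5:
  assumes "finite V" "pendant_P5 V E u x y z j k"
  shows "card V = card (V - {x, y, z, j, k}) + 5"
proof -
  have "{x, y, z, j, k} \<subseteq> V" "card {x, y, z, j, k} = 5"
    using pendant_P5_in_V(1)[OF assms(2)] pendant_P5D(1)[OF assms(2)] by auto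
  then show ?thesis using card_Int_Diff[OF assms(1), of "{x, y, z, j, k}"] by (simp add: Int_absorb1)
qed

lemma dissociation_number_remove_pendant_P5:
  assumes "finite V" "pendant_P5 V E u x y z j k" "dissociation_set V E F" "z \<notin> F"
  shows "card F \<le> dissociation_number (V - {x, y, z, j, k}) {e \<in> E. e \<subseteq> V - {x, y, z, j, k}} + 4"
proof -
  let ?P = "{x, y, z, j, k}"
  have "dissociation_set (V - ?P) {e \<in> E. e \<subseteq> V - ?P} (F - ?P)"
  proof (rule dissociation_set_subgraph[OF assms(3,1)])
    show "F - ?P \<subseteq> V - ?P" using assms(3) unfolding dissociation_set_def by blast
  qed (simp_all add: adj_induced)
  then have "card (F - ?P) \<le> dissociation_number (V - ?P) {e \<in> E. e \<subseteq> V - ?P}"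
    using assms(1) by (intro card_le_dissociation_number) simp
  moreover have "card (F \<inter> ?P) \<le> card {x, y, j, k}" using assms(4) by (intro card_mono) auto
  moreover have "card {x, y, j, k} = 4" using pendant_P5D(1)[OF assms(2)] by simp
  moreover have "finite F" using assms(1,3) finite_subset unfolding dissociation_set_def by blast
  ultimately show ?thesis using card_Int_Diff[of F ?P] by linarith
qed

section \<open>Structure of extremal dissociation sets\<close>

locale extremal_dissociation_set =
  fixes V :: "'a set" and E :: "'a set set" and F :: "'a set"
  assumes subcubic: "subcubic_tree V E"
    and dissociation: "dissociation_set V E F"
    and extremal: "5 * card F = 4 * card V + 2"
begin

lemma simple: "simple_graph V E" and connected: "connected_graph V E"
  and max_degree: "\<forall>v\<in>V. degree V E v \<le> 3"
  using subcubic unfolding subcubic_tree_def tree_def by auto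

lemma finite_V: "finite V"
  using simple by (rule simple_graph_finite)

lemma F_subset: "F \<subseteq> V"
  using dissociation unfolding dissociation_set_def by simp

lemma finite_F: "finite F"
  using finite_V F_subset by (rule finite_subset[rotated])

lemma card_V: "card V = card F + card (V - F)"
  using finite_V F_subset by (metis card_Diff_subset card_mono finite_F le_add_diff_inverse)

lemma card_F: "card F = 4 * card (V - F) + 2"
  using extremal card_V by linarith

lemma tight_sums:
  "(\<Sum>v\<in>F. card (nbrs F E v)) = (\<Sum>v\<in>F. 1)"
  "(\<Sum>v\<in>V - F. 2 * card (nbrs F E v) + card (nbrs (V - F) E v)) = (\<Sum>v\<in>V - F. 6)"
  using dissociation_degree_count[OF simple connected max_degree dissociation] card_V card_F
  by simp_all

lemma card_nbrs_in_F: "v \<in> F \<Longrightarrow> card (nbrs F E v) = 1"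
  using dissociation unfolding dissociation_set_def
  by (intro sum_mono_inv[OF tight_sums(1)] finite_F) auto

lemma outside_F_nbrs:
  assumes "v \<in> V - F"
  shows "card (nbrs F E v) = 3" and "nbrs (V - F) E v = {}"
proof -
  have "2 * card (nbrs F E v) + card (nbrs (V - F) E v) = 6"
    using assms finite_V max_degree degree_split[OF finite_V F_subset]
    by (intro sum_mono_inv[OF tight_sums(2)]) fastforce+
  moreover have "card (nbrs F E v) + card (nbrs (V - F) E v) \<le> 3"
    using assms max_degree degree_split[OF finite_V F_subset] by fastforce
  ultimately have "card (nbrs F E v) = 3" "card (nbrs (V - F) E v) = 0" by linarith+
  then show "card (nbrs F E v) = 3" and "nbrs (V - F) E v = {}"
    using finite_V by simp_all
qed

definition partner :: "'a \<Rightarrow> 'a" where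
  "partner v = (THE w. w \<in> F \<and> adj E w v)"

lemma nbrs_F_partner:
  assumes "v \<in> F"
  shows "nbrs F E v = {partner v}"
proof -
  obtain w where w: "nbrs F E v = {w}"
    using card_nbrs_in_F[OF assms] by (auto simp: card_1_singleton_iff)
  then have "partner v = w" unfolding partner_def by (intro the_equality) blast+
  with w show ?thesis by simp
qed

lemma partner_in_F_adj: "v \<in> F \<Longrightarrow> partner v \<in> F \<and> adj E (partner v) v"
  using nbrs_F_partner by blast

lemma partner_unique: "v \<in> F \<Longrightarrow> w \<in> F \<Longrightarrow> adj E w v \<Longrightarrow> w = partner v"
  using nbrs_F_partner by blast

lemma partner_partner: "v \<in> F \<Longrightarrow> partner (partner v) = v"
  using partner_in_F_adj partner_unique adj_commute by metis

lemma partner_neq: "v \<in> F \<Longrightarrow> partner v \<noteq> v"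
  using partner_in_F_adj simple_graph_adj_irrefl[OF simple] by metis

lemma nbrs_of_F:
  "v \<in> F \<Longrightarrow> nbrs V E v = insert (partner v) (nbrs (V - F) E v)"
  using nbrs_F_partner F_subset by blast

definition outdeg :: "'a \<Rightarrow> nat" where
  "outdeg v = card (nbrs (V - F) E v)"

lemma outdeg_zero: "outdeg v = 0 \<longleftrightarrow> nbrs (V - F) E v = {}"
  unfolding outdeg_def using finite_V by simp

lemma sum_outdeg: "(\<Sum>v\<in>F. outdeg v) = 3 * card (V - F)"
  unfolding outdeg_def using finite_F finite_V outside_F_nbrs(1)
  by (intro sum_multicount) (auto simp: adj_commute)

lemma sum_outdeg_partner: "(\<Sum>v\<in>F. outdeg (partner v)) = (\<Sum>v\<in>F. outdeg v)"
proof -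
  have "bij_betw partner F F"
    using partner_in_F_adj partner_partner by (intro bij_betw_byWitness[where f' = partner]) auto
  then show ?thesis by (rule sum.reindex_bij_betw)
qed

text \<open>Connectivity forces every edge of the induced matching F to see a vertex outside F.\<close>
lemma outdeg_matching_edge_pos:
  assumes "V - F \<noteq> {}" "v \<in> F"
  shows "1 \<le> outdeg v + outdeg (partner v)"
proof (rule ccontr)
  assume "\<not> ?thesis"
  then have "outdeg v = 0" "outdeg (partner v) = 0" by simp_all
  then have no_out: "nbrs (V - F) E v = {}" "nbrs (V - F) E (partner v) = {}"
    by (simp_all only: outdeg_zero)
  have closed: "b \<in> {v, partner v}" if "a \<in> {v, partner v}" "adj E a b" for a b
  proof -
    have "b \<in> V" using simple_graph_adjD[OF simple that(2)] by simp
    moreover have "adj E b a" using that(2) by (simp add: adj_commute)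
    ultimately have "b \<in> F" using that(1) no_out by blast
    from that(1) consider "a = v" | "a = partner v" by blast
    then show ?thesis
    proof cases
      case 1
      then show ?thesis using partner_unique[OF assms(2) \<open>b \<in> F\<close>] \<open>adj E b a\<close> by simp
    next
      case 2
      then have "b = partner (partner v)"
        using partner_unique[OF _ \<open>b \<in> F\<close>] partner_in_F_adj[OF assms(2)] \<open>adj E b a\<close> by simp
      then show ?thesis using partner_partner[OF assms(2)] by simp
    qed
  qed
  obtain s where s: "s \<in> V - F" using assms(1) by blast
  then obtain p where p: "p \<noteq> []" "hd p = v" "last p = s" "walk E p"
    using connected assms(2) F_subset unfolding connected_graph_def by blast
  have "set p \<subseteq> {v, partner v}" by (rule walk_set_closed[OF p(4)]) (use p(2) closed in auto)
  then have "s \<in> {v, partner v}" using p(1,3) last_in_set by blast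
  then show False using s assms(2) partner_in_F_adj by auto
qed

text \<open>In a pendant P5 x y z j k, the vertices y and j are leaf supports.\<close>
definition leaf_supports :: "'a set" where
  "leaf_supports = {v \<in> F. outdeg v = 1 \<and> outdeg (partner v) = 0}"

text \<open>The 2|V - F| + 1 matching edges see V - F only 3|V - F| times, at least once each.\<close>
lemma card_leaf_supports:
  assumes "V - F \<noteq> {}"
  shows "card (V - F) + 2 \<le> card leaf_supports"
proof -
  define light where "light = {v \<in> F. outdeg v + outdeg (partner v) \<le> 1}"
  have "(\<Sum>v\<in>F. 2) \<le> (\<Sum>v\<in>F. outdeg v + outdeg (partner v) + (if v \<in> light then 1 else 0))"
    using outdeg_matching_edge_pos[OF assms] unfolding light_def by (intro sum_mono) force
  also have "\<dots> = 6 * card (V - F) + card light"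
    using finite_F sum_outdeg sum_outdeg_partner
    by (simp add: sum.distrib sum.If_cases light_def Int_def)
  finally have "2 * card (V - F) + 4 \<le> card light" using card_F by simp
  also have "card light \<le> card (leaf_supports \<union> partner ` leaf_supports)"
  proof (rule card_mono)
    show "finite (leaf_supports \<union> partner ` leaf_supports)"
      using finite_F unfolding leaf_supports_def by simp
    show "light \<subseteq> leaf_supports \<union> partner ` leaf_supports"
    proof
      fix v assume "v \<in> light"
      then have "v \<in> F" "outdeg v + outdeg (partner v) = 1"
        using outdeg_matching_edge_pos[OF assms] unfolding light_def by force+
      then show "v \<in> leaf_supports \<union> partner ` leaf_supports"
        unfolding leaf_supports_def using partner_in_F_adj partner_partner
        by (cases "outdeg v = 1") (auto intro!: image_eqI[of v partner "partner v"])
    qed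
  qed
  also have "\<dots> \<le> card leaf_supports + card (partner ` leaf_supports)"
    by (rule card_Un_le)
  also have "card (partner ` leaf_supports) \<le> card leaf_supports"
    using finite_F unfolding leaf_supports_def by (intro card_image_le) simp
  finally show ?thesis by linarith
qed

lemma shared_outside_nbr:
  assumes "V - F \<noteq> {}"
  obtains z y j where "z \<in> V - F" "y \<in> leaf_supports" "j \<in> leaf_supports" "y \<noteq> j"
    "adj E z y" "adj E z j"
proof -
  let ?L = leaf_supports
  have fin_L: "finite ?L" using finite_F unfolding leaf_supports_def by simp
  have "(\<Sum>z\<in>V - F. card (nbrs ?L E z)) = 1 * card ?L"
  proof (rule sum_multicount)
    show "\<forall>y\<in>?L. card {z \<in> V - F. adj E y z} = 1"
      unfolding leaf_supports_def outdeg_def by (simp add: adj_commute)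
  qed (use finite_V fin_L in auto)
  then have "\<exists>z\<in>V - F. \<not> card (nbrs ?L E z) \<le> 1"
    using sum_mono[of "V - F" "\<lambda>z. card (nbrs ?L E z)" "\<lambda>_. 1"] card_leaf_supports[OF assms]
    by force
  then obtain z where z: "z \<in> V - F" "\<not> card (nbrs ?L E z) \<le> 1" by blast
  have "finite (nbrs ?L E z)" by (rule finite_subset[OF _ fin_L]) blast
  then have "\<not> (\<forall>a\<in>nbrs ?L E z. \<forall>b\<in>nbrs ?L E z. a = b)"
    using z(2) card_le_Suc0_iff_eq by fastforce
  then obtain y j where "y \<in> nbrs ?L E z" "j \<in> nbrs ?L E z" "y \<noteq> j" by blast
  then have "y \<in> ?L" "j \<in> ?L" "y \<noteq> j" "adj E z y" "adj E z j"
    by (simp_all add: adj_commute[of E _ z])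
  with z(1) show ?thesis by (rule that)
qed

lemma leaf_support_nbrs:
  assumes "y \<in> leaf_supports" "z \<in> V - F" "adj E z y"
  shows "nbrs V E y = {partner y, z}" and "nbrs V E (partner y) = {y}"
proof -
  have y: "y \<in> F" "outdeg y = 1" "outdeg (partner y) = 0"
    using assms(1) unfolding leaf_supports_def by auto
  obtain w where "nbrs (V - F) E y = {w}"
    using y(2) unfolding outdeg_def by (auto simp: card_1_singleton_iff)
  then have "nbrs (V - F) E y = {z}" using assms(2,3) by auto
  then show "nbrs V E y = {partner y, z}" using nbrs_of_F[OF y(1)] by simp
  show "nbrs V E (partner y) = {y}"
  proof -
    have "nbrs (V - F) E (partner y) = {}" using y(3) by (simp only: outdeg_zero)
    moreover have "nbrs V E (partner y) = insert (partner (partner y)) (nbrs (V - F) E (partner y))"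
      using partner_in_F_adj[OF y(1)] by (intro nbrs_of_F) simp
    ultimately show ?thesis using partner_partner[OF y(1)] by (simp only:)
  qed
qed

lemma pendant_P5_exists:
  assumes "V - F \<noteq> {}"
  obtains u x y z j k where "pendant_P5 V E u x y z j k" "z \<notin> F"
proof -
  obtain z y j where z: "z \<in> V - F" and yj: "y \<in> leaf_supports" "j \<in> leaf_supports" "y \<noteq> j"
    and adj: "adj E z y" "adj E z j"
    using shared_outside_nbr[OF assms] by blast
  have F: "y \<in> F" "j \<in> F" using yj unfolding leaf_supports_def by auto
  define x k where "x = partner y" and "k = partner j"
  have nbrs_y: "nbrs V E y = {x, z}" "nbrs V E x = {y}"
    and nbrs_j: "nbrs V E j = {k, z}" "nbrs V E k = {j}"
    using leaf_support_nbrs yj(1,2) z adj unfolding x_def k_def by auto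
  have "nbrs V E z = nbrs F E z" using outside_F_nbrs(2)[OF z] F_subset by blast
  moreover have "card (nbrs F E z) = 3" "y \<in> nbrs F E z" "j \<in> nbrs F E z"
    using outside_F_nbrs(1)[OF z] F adj by (simp_all add: adj_commute[of E _ z])
  ultimately have "card (nbrs V E z - {y, j}) = 1" using yj(3) finite_F by (simp add: card_Diff_subset)
  then obtain u where "nbrs V E z - {y, j} = {u}" by (auto simp: card_1_singleton_iff)
  then have u: "nbrs V E z = {y, j, u}" "u \<notin> {y, j}"
    using \<open>y \<in> nbrs F E z\<close> \<open>j \<in> nbrs F E z\<close> \<open>nbrs V E z = nbrs F E z\<close> by auto
  have "x \<in> F" "k \<in> F" "x \<noteq> k" using F yj(3) partner_in_F_adj partner_partner unfolding x_def k_def by metis+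
  then have "distinct [x, y, z, j, k]" using z nbrs_y nbrs_j F yj(3) partner_neq unfolding x_def k_def
    by auto
  moreover have "u \<notin> {x, y, z, j, k}"
  proof -
    have "u \<in> nbrs V E z" using u(1) by simp
    then have "z \<in> nbrs V E u" "u \<noteq> z"
      using z simple_graph_adj_irrefl[OF simple] by (auto simp: adj_commute[of E u])
    then show ?thesis using u(2) nbrs_y(2) nbrs_j(2) z F by auto
  qed
  ultimately have "pendant_P5 V E u x y z j k"
    unfolding pendant_P5_def using nbrs_y nbrs_j u by simp
  then show ?thesis using that z by blast
qed

lemma K2_if_F_eq_V:
  assumes "V - F = {}"
  shows "(V, E) \<in> P5_trees"
proof -
  have "F = V" using assms F_subset by blast
  moreover have "card V = 2" using card_F card_V assms by simp
  ultimately obtain a b where ab: "V = {a, b}" "a \<noteq> b" "F = {a, b}" by (meson card_2_iff)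
  then have "partner a = b" using partner_in_F_adj[of a] partner_neq[of a] by auto
  then have "adj E b a" using partner_in_F_adj[of a] ab by simp
  then have "{a, b} \<in> E" unfolding adj_def by (simp add: insert_commute)
  moreover have "e = {a, b}" if "e \<in> E" for e
  proof -
    obtain p q where "e = {p, q}" "p \<noteq> q" "p \<in> {a, b}" "q \<in> {a, b}"
      using simple \<open>e \<in> E\<close> ab(1) unfolding simple_graph_def by blast
    then show ?thesis by (auto simp: doubleton_eq_iff)
  qed
  ultimately have "E = {{a, b}}" by blast
  then show ?thesis using P5_trees.K2[OF ab(2)] ab(1) by simp
qed

end

lemma extremal_subcubic_tree_in_P5_trees:
  "subcubic_tree V E \<Longrightarrow> 5 * dissociation_number V E = 4 * card V + 2 \<Longrightarrow> (V, E) \<in> P5_trees"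
proof (induction "card V" arbitrary: V E rule: less_induct)
  case less
  have fin: "finite V"
    using less.prems(1) simple_graph_finite unfolding subcubic_tree_def tree_def by blast
  obtain F where F: "dissociation_set V E F" "card F = dissociation_number V E"
    using dissociation_number_attained[OF fin] by blast
  interpret extremal_dissociation_set V E F
    using less.prems F by unfold_locales simp_all
  show ?case
  proof (cases "V - F = {}")
    case True
    then show ?thesis by (rule K2_if_F_eq_V)
  next
    case False
    then obtain u x y z j k where P5: "pendant_P5 V E u x y z j k" and "z \<notin> F"
      by (rule pendant_P5_exists)
    let ?V' = "V - {x, y, z, j, k}" and ?E' = "{e \<in> E. e \<subseteq> V - {x, y, z, j, k}}"
    have tree': "subcubic_tree ?V' ?E'" by (rule pendant_P5_removal(1)[OF subcubic P5])
    have card_V: "card V = card ?V' + 5" by (rule card_remove_pendant_P5[OF fin P5])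
    have "card F \<le> dissociation_number ?V' ?E' + 4"
      by (rule dissociation_number_remove_pendant_P5[OF fin P5 dissociation \<open>z \<notin> F\<close>])
    moreover have "5 * dissociation_number ?V' ?E' \<le> 4 * card ?V' + 2"
      using tree' unfolding subcubic_tree_def tree_def by (intro dissociation_number_bound) auto
    ultimately have "5 * dissociation_number ?V' ?E' = 4 * card ?V' + 2"
      using card_V extremal by linarith
    then have "(?V', ?E') \<in> P5_trees" using less.hyps[OF _ tree'] card_V by simp
    then have "(?V' \<union> {x, y, z, j, k}, ?E' \<union> {{u, z}, {z, y}, {z, j}, {y, x}, {j, k}}) \<in> P5_trees"
      using pendant_P5D(1,2)[OF P5] pendant_P5_in_V(2)[OF P5] by (intro P5_trees.attach) auto
    moreover have "?V' \<union> {x, y, z, j, k} = V" using pendant_P5_in_V(1)[OF P5] by blast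
    ultimately show ?thesis using pendant_P5_removal(2)[OF subcubic P5] by simp
  qed
qed

theorem theorem2p3:
  fixes V :: "'a set" and E :: "'a set set"
  assumes "subcubic_tree V E"
  shows "real (dissociation_number V E) \<le> (4 * real (card V) + 2) / 5 \<and>
         (real (dissociation_number V E) = (4 * real (card V) + 2) / 5 \<longleftrightarrow> (V, E) \<in> P5_trees)"
proof -
  have bound: "5 * dissociation_number V E \<le> 4 * card V + 2"
    using assms unfolding subcubic_tree_def tree_def by (intro dissociation_number_bound) auto
  have "5 * dissociation_number V E = 4 * card V + 2 \<longleftrightarrow> (V, E) \<in> P5_trees"
    using bound extremal_subcubic_tree_in_P5_trees[OF assms] P5_trees_dissociation_number[of V E]
    by linarith
  moreover have "real (dissociation_number V E) = (4 * real (card V) + 2) / 5 \<longleftrightarrow>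
      real (5 * dissociation_number V E) = real (4 * card V + 2)"
    by auto
  moreover have "real (5 * dissociation_number V E) = real (4 * card V + 2) \<longleftrightarrow>
      5 * dissociation_number V E = 4 * card V + 2"
    by (rule of_nat_eq_iff)
  moreover have "real (dissociation_number V E) \<le> (4 * real (card V) + 2) / 5"
    using of_nat_mono[OF bound, where 'a = real] by simp
  ultimately show ?thesis by blast
qed

end
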